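(* Let $p>0$, $m>0$, and let $N$ be a random variable on $\mathbb{N}_0$ with the Abel probability mass function \[ f(n)=\mathbb{P}(N=n)=\frac{p\,(p+n)^{n-1}}{n!}\exp\Big(n\Big(\log\frac{m}{m+p}-\frac{m}{m+p}\Big)-\frac{mp}{m+p}\Big),\quad n\in\mathbb{N}_0 . \] Let $b(n)=\frac{1}{\sqrt{n+1}}\Big(\sqrt{1+\tfrac1n}-1\Big)$ for $n\in\mathbb{N}=\{1,2,\dots\}$. Then there is a constant $C$ not depending on $n$ such that \[ f(n\mid n\ge 1):=\mathbb{P}(N=n\mid N\ge 1)\le C\,b(n)\qquad\text{for all } n=1,2,\ldots. \]
   Context: $b$ is the probability mass function of $\lfloor U^{-2}\rfloor$ for $U$ uniform on $(0,1)$. The constant $C$ may depend on $p$ and $m$. *)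

theory Defs
  imports "HOL-Analysis.Analysis"
begin

definition abel_pmf :: "real \<Rightarrow> real \<Rightarrow> nat \<Rightarrow> real" where
  "abel_pmf p m n =
     p * (p + real n) powr (real n - 1) / fact n *
     exp (real n * (ln (m / (m + p)) - m / (m + p)) - m * p / (m + p))"

definition abel_cond_pmf :: "real \<Rightarrow> real \<Rightarrow> nat \<Rightarrow> real" where
  "abel_cond_pmf p m n = abel_pmf p m n / (\<Sum>k. abel_pmf p m (Suc k))"

text \<open>b(n) = (sqrt(1 + 1/n) - 1) / sqrt(n+1), the pmf of floor(U^(-2)).\<close>
definition b_fun :: "nat \<Rightarrow> real" where
  "b_fun n = (sqrt (1 + 1 / real n) - 1) / sqrt (real n + 1)"

end

theory Submission
  imports Defs
begin

(* With r = m/(m+p), bounding n! below by n^n e^(-n) and (p+n)^(n-1) above by n^(n-1) e^p gives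
   f(n) <= K s^n / n with s = r e^(1-r) < 1.  Geometric decay beats b(n) >= 1/(6 n^(3/2)), and it
   makes the series of f converge, so that P(N >= 1) > 0. *)

lemma power_le_exp_mult_fact:
  fixes x :: real
  assumes "0 \<le> x"
  shows "x ^ n \<le> exp x * fact n"
proof -
  have "(\<lambda>k. x ^ k / fact k) sums exp x"
    using exp_converges[of x] by (simp add: divide_inverse mult.commute)
  then have "(\<Sum>k\<in>{n}. x ^ k / fact k) \<le> exp x"
    using assms sum_le_suminf[of "\<lambda>k. x ^ k / fact k" "{n}"] by (auto simp: sums_iff)
  then show ?thesis by (simp add: divide_le_eq)
qed

lemma mult_exp_one_minus_less_one:
  fixes r :: real
  assumes "r \<noteq> 1"
  shows "r * exp (1 - r) < 1"
proof -
  have "r < exp (r - 1)"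
    using exp_minus_greater[of "1 - r"] assms by simp
  then have "r * exp (1 - r) < exp (r - 1) * exp (1 - r)"
    by simp
  then show ?thesis by (simp flip: exp_add)
qed

lemma of_nat_mult_power_le:
  fixes s :: real
  assumes "0 < s" "s < 1"
  shows "real n * s ^ n \<le> s / (1 - s)"
proof -
  define d where "d = 1 / s - 1"
  have "d > 0" "1 + d = 1 / s" "d * s = 1 - s"
    using assms by (auto simp: d_def field_simps)
  have "1 + real n * d \<le> (1 / s) ^ n"
    using Bernoulli_inequality[of d n] \<open>d > 0\<close> \<open>1 + d = 1 / s\<close> by simp
  then have "s ^ n + real n * d * s ^ n \<le> 1"
    using assms by (simp add: power_one_over field_simps)
  then have "real n * d * s ^ n \<le> 1"
    using assms by (smt (verit) zero_less_power)
  then have "real n * d * s ^ n * s \<le> s"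
    using mult_right_mono[of _ 1 s] assms by simp
  also have "real n * d * s ^ n * s = real n * s ^ n * (1 - s)"
    using \<open>d * s = 1 - s\<close> by (metis mult.commute mult.left_commute)
  finally show ?thesis
    using assms by (simp add: le_divide_eq)
qed

lemma add_powr_pred_le:
  fixes p :: real
  assumes "0 \<le> p" "n \<ge> 1"
  shows "(p + real n) powr (real n - 1) \<le> real n ^ (n - 1) * exp p"
proof -
  have n: "real n \<ge> 1" using assms by simp
  have "(1 + p / real n) ^ (n - 1) \<le> exp (p / real n) ^ (n - 1)"
    using assms n by (intro power_mono) auto
  also have "\<dots> = exp (real (n - 1) * (p / real n))"
    by (simp flip: exp_of_nat_mult)
  also have "\<dots> \<le> exp p"
    using assms n by (simp add: of_nat_diff field_simps)
  finally have exp_bound: "(1 + p / real n) ^ (n - 1) \<le> exp p" .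
  have "(p + real n) powr (real n - 1) = (p + real n) powr real (n - 1)"
    using assms by (simp add: of_nat_diff)
  also have "\<dots> = (p + real n) ^ (n - 1)"
    using assms by (intro powr_realpow) simp
  also have "\<dots> = real n ^ (n - 1) * (1 + p / real n) ^ (n - 1)"
    using n by (simp add: field_simps flip: power_mult_distrib)
  also have "\<dots> \<le> real n ^ (n - 1) * exp p"
    using exp_bound by (simp add: mult_left_mono)
  finally show ?thesis .
qed

lemma b_fun_lower_bound:
  assumes "n \<ge> 1"
  shows "1 / (6 * real n * sqrt (real n)) \<le> b_fun n"
proof -
  define q where "q = sqrt (1 + 1 / real n)"
  have n: "real n \<ge> 1" using assms by simp
  have "q \<le> sqrt 4"
    unfolding q_def using n by (intro real_sqrt_le_mono) (simp add: divide_le_eq)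
  then have "q + 1 \<le> 3" by simp
  have "1 \<le> q" using n by (simp add: q_def)
  have "1 / real n = (q - 1) * (q + 1)"
    using n by (simp add: q_def algebra_simps)
  also have "\<dots> \<le> (q - 1) * 3"
    using \<open>q + 1 \<le> 3\<close> \<open>1 \<le> q\<close> by (intro mult_left_mono) auto
  finally have numerator: "1 / (3 * real n) \<le> q - 1"
    using n by (simp add: field_simps)
  have "sqrt (real n + 1) \<le> sqrt (4 * real n)"
    using n by simp
  then have denominator: "sqrt (real n + 1) \<le> 2 * sqrt (real n)"
    by (simp add: real_sqrt_mult)
  have "1 / (6 * real n * sqrt (real n)) = (1 / (3 * real n)) / (2 * sqrt (real n))"
    by simp
  also have "\<dots> \<le> (q - 1) / (2 * sqrt (real n))"
    using numerator by (intro divide_right_mono) auto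
  also have "\<dots> \<le> (q - 1) / sqrt (real n + 1)"
    using \<open>1 \<le> q\<close> denominator n by (intro divide_left_mono) auto
  finally show ?thesis by (simp add: b_fun_def q_def)
qed

lemma abel_pmf_pos: "p > 0 \<Longrightarrow> 0 < abel_pmf p m n"
  by (simp add: abel_pmf_def)

lemma abel_pmf_le_geometric:
  fixes p m :: real
  assumes "p > 0" "m > 0" "n \<ge> 1"
  defines "r \<equiv> m / (m + p)"
  shows "abel_pmf p m n \<le> p * exp (p - m * p / (m + p)) * (r * exp (1 - r)) ^ n / real n"
proof -
  have n: "real n \<ge> 1" using assms by simp
  have "r > 0" using assms by (simp add: r_def)
  define E where "E = exp (- (m * p / (m + p)))"
  have inverse_fact_le: "1 / fact n \<le> exp (real n) / real n ^ n"
    using power_le_exp_mult_fact[of "real n" n] n by (simp add: field_simps)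
  have "abel_pmf p m n = p * (p + real n) powr (real n - 1) * (1 / fact n) * ((r * exp (- r)) ^ n * E)"
  proof -
    have "exp (real n * (ln r - r)) = (r * exp (- r)) ^ n"
      using \<open>r > 0\<close> by (simp add: exp_of_nat_mult exp_diff exp_minus divide_inverse)
    then show ?thesis
      unfolding abel_pmf_def r_def[symmetric] E_def by (simp add: exp_diff exp_minus divide_inverse)
  qed
  also have "\<dots> \<le> p * (real n ^ (n - 1) * exp p) * (exp (real n) / real n ^ n) * ((r * exp (- r)) ^ n * E)"
    using add_powr_pred_le[of p n] inverse_fact_le assms \<open>r > 0\<close>
    by (intro mult_right_mono mult_mono mult_left_mono) (auto simp: E_def)
  also have "\<dots> = p * exp (p - m * p / (m + p)) * (r * exp (1 - r)) ^ n / real n"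
  proof -
    have "real n ^ n = real n * real n ^ (n - 1)"
      using assms by (cases n) auto
    moreover have "exp (real n) * (r * exp (- r)) ^ n = (r * exp (1 - r)) ^ n"
      by (simp add: exp_diff exp_minus power_mult_distrib field_simps flip: exp_of_nat_mult)
    ultimately show ?thesis
      using n by (simp add: E_def exp_diff exp_minus field_simps)
  qed
  finally show ?thesis .
qed

lemma abel_pmf_geometric_decay:
  fixes p m :: real
  assumes "p > 0" "m > 0"
  shows "\<exists>K s. 0 < K \<and> 0 < s \<and> s < 1 \<and> (\<forall>n\<ge>1. abel_pmf p m n \<le> K * s ^ n / real n)"
proof -
  define r where "r = m / (m + p)"
  have "0 < r" "r < 1" using assms by (auto simp: r_def)
  then have "r * exp (1 - r) < 1"
    by (intro mult_exp_one_minus_less_one) simp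
  moreover have "0 < r * exp (1 - r)" "0 < p * exp (p - m * p / (m + p))"
    using \<open>0 < r\<close> assms by auto
  ultimately show ?thesis
    using abel_pmf_le_geometric[OF assms] unfolding r_def by blast
qed

lemma abel_pmf_le_b_fun:
  fixes p m :: real
  assumes "p > 0" "m > 0"
  shows "\<exists>A. \<forall>n\<ge>1. abel_pmf p m n \<le> A * b_fun n"
proof -
  obtain K s where "0 < K" "0 < s" "s < 1" and decay: "\<forall>n\<ge>1. abel_pmf p m n \<le> K * s ^ n / real n"
    using abel_pmf_geometric_decay[OF assms] by blast
  define B where "B = K * (s / (1 - s))"
  have "0 \<le> B" using \<open>0 < K\<close> \<open>0 < s\<close> \<open>s < 1\<close> by (simp add: B_def)
  have "abel_pmf p m n \<le> 6 * B * b_fun n" if "n \<ge> 1" for n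
  proof -
    have n: "real n \<ge> 1" using that by simp
    have "sqrt (real n) \<le> sqrt (real n * real n)"
      using n by (intro real_sqrt_le_mono) (simp add: mult_le_cancel_left1)
    then have "sqrt (real n) \<le> real n" by simp
    have "abel_pmf p m n \<le> K * (real n * s ^ n) / (real n * real n)"
      using decay that n by simp
    also have "\<dots> \<le> B / (real n * sqrt (real n))"
      unfolding B_def using \<open>0 < K\<close> \<open>0 < s\<close> \<open>s < 1\<close> n \<open>sqrt (real n) \<le> real n\<close>
      by (intro frac_le mult_left_mono of_nat_mult_power_le) auto
    also have "\<dots> = 6 * B * (1 / (6 * real n * sqrt (real n)))"
      by simp
    also have "\<dots> \<le> 6 * B * b_fun n"
      using b_fun_lower_bound[OF that] \<open>0 \<le> B\<close> by (intro mult_left_mono) auto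
    finally show ?thesis .
  qed
  then show ?thesis by blast
qed

lemma abel_pmf_tail_sum_pos:
  fixes p m :: real
  assumes "p > 0" "m > 0"
  shows "0 < (\<Sum>k. abel_pmf p m (Suc k))"
proof (rule suminf_pos)
  obtain K s where "0 < K" "0 < s" "s < 1" and decay: "\<forall>n\<ge>1. abel_pmf p m n \<le> K * s ^ n / real n"
    using abel_pmf_geometric_decay[OF assms] by blast
  have bound: "norm (abel_pmf p m n) \<le> K * s ^ n" if "n \<ge> 1" for n
  proof -
    have "abel_pmf p m n \<le> K * s ^ n / real n"
      using decay that by blast
    also have "\<dots> \<le> K * s ^ n / 1"
      using that \<open>0 < K\<close> \<open>0 < s\<close> by (intro frac_le) auto
    finally show ?thesis
      using abel_pmf_pos[OF \<open>p > 0\<close>, of m n] by simp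
  qed
  have "summable (\<lambda>n. K * s ^ n)"
    using \<open>0 < s\<close> \<open>s < 1\<close> by (intro summable_mult summable_geometric) simp
  then have "summable (abel_pmf p m)"
    using bound by (rule summable_comparison_test')
  then show "summable (\<lambda>k. abel_pmf p m (Suc k))"
    by (simp add: summable_Suc_iff)
  show "0 < abel_pmf p m (Suc k)" for k
    using abel_pmf_pos[OF \<open>p > 0\<close>] .
qed

theorem mainTheorem3:
  fixes p m :: real
  assumes "p > 0" and "m > 0"
  shows "\<exists>C::real. \<forall>n::nat. n \<ge> 1 \<longrightarrow> abel_cond_pmf p m n \<le> C * b_fun n"
proof -
  obtain A where A: "\<forall>n\<ge>1. abel_pmf p m n \<le> A * b_fun n"
    using abel_pmf_le_b_fun[OF assms] by blast
  define S where "S = (\<Sum>k. abel_pmf p m (Suc k))"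
  have "S > 0"
    unfolding S_def using abel_pmf_tail_sum_pos[OF assms] .
  have "abel_cond_pmf p m n \<le> A / S * b_fun n" if "n \<ge> 1" for n
    using divide_right_mono[OF A[rule_format, OF that], of S] \<open>S > 0\<close>
    by (simp add: abel_cond_pmf_def S_def)
  then show ?thesis by blast
qed

end
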